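(* Let $G$ be a block graph with at least one edge and let $H$ be a maximal threshold subgraph of $G$. Then there exist a block $Q$ of $G$ and a vertex $u\in V(Q)$ such that $E(H)=E(Q_u(G))$.
   Context: All graphs are finite and simple. A block is a maximal connected subgraph with no cut-vertex of its own; a block graph is a graph whose blocks are all complete. For a clique $Q$ in $G$ and $u\in V(Q)$, $Q_u(G)=\big(V(Q)\cup N_G(u),\ E(Q)\cup\delta_G(u)\big)$, where $N_G(u)$ is the neighbourhood and $\delta_G(u)$ the incident edge set of $u$. A threshold graph is a graph obtainable from a single vertex by repeatedly adding an isolated or a universal vertex; equivalently, a graph with no induced $P_4$, $C_4$ or $2K_2$. A threshold subgraph $H$ of $G$ is maximal if no threshold subgraph $H'$ of $G$ satisfies $E(H)\subsetneq E(H')$. *)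

theory Defs
  imports Main
begin

definition graph :: "'a set \<Rightarrow> 'a set set \<Rightarrow> bool" where
  "graph V E \<longleftrightarrow> finite V \<and> (\<forall>e\<in>E. \<exists>x y. e = {x, y} \<and> x \<noteq> y \<and> x \<in> V \<and> y \<in> V)"

definition subgraph :: "'a set \<Rightarrow> 'a set set \<Rightarrow> 'a set \<Rightarrow> 'a set set \<Rightarrow> bool" where
  "subgraph V' E' V E \<longleftrightarrow> V' \<subseteq> V \<and> E' \<subseteq> E \<and> graph V' E'"

definition reachable :: "'a set \<Rightarrow> 'a set set \<Rightarrow> 'a \<Rightarrow> 'a \<Rightarrow> bool" where
  "reachable V E x y \<longleftrightarrow> x \<in> V \<and> y \<in> V \<and> (\<lambda>a b. {a, b} \<in> E \<and> a \<in> V \<and> b \<in> V)\<^sup>*\<^sup>* x y"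

definition connected_graph :: "'a set \<Rightarrow> 'a set set \<Rightarrow> bool" where
  "connected_graph V E \<longleftrightarrow> V \<noteq> {} \<and> (\<forall>x\<in>V. \<forall>y\<in>V. reachable V E x y)"

definition del_vertex_edges :: "'a set set \<Rightarrow> 'a \<Rightarrow> 'a set set" where
  "del_vertex_edges E v = {e \<in> E. v \<notin> e}"

text \<open>v is a cut-vertex: deleting it increases the number of components,
  i.e. it separates two vertices lying in the same component.\<close>
definition cut_vertex :: "'a set \<Rightarrow> 'a set set \<Rightarrow> 'a \<Rightarrow> bool" where
  "cut_vertex V E v \<longleftrightarrow> v \<in> V \<and> (\<exists>x\<in>V - {v}. \<exists>y\<in>V - {v}.
      reachable V E x y \<and> \<not> reachable (V - {v}) (del_vertex_edges E v) x y)"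

definition biconn_piece :: "'a set \<Rightarrow> 'a set set \<Rightarrow> bool" where
  "biconn_piece V E \<longleftrightarrow> connected_graph V E \<and> (\<nexists>v. cut_vertex V E v)"

definition is_block :: "'a set \<Rightarrow> 'a set set \<Rightarrow> 'a set \<Rightarrow> 'a set set \<Rightarrow> bool" where
  "is_block V E B EB \<longleftrightarrow> subgraph B EB V E \<and> biconn_piece B EB \<and>
     (\<forall>B' EB'. subgraph B' EB' V E \<and> biconn_piece B' EB' \<and> B \<subseteq> B' \<and> EB \<subseteq> EB'
        \<longrightarrow> B' = B \<and> EB' = EB)"

definition complete_graph :: "'a set \<Rightarrow> 'a set set \<Rightarrow> bool" where
  "complete_graph V E \<longleftrightarrow> (\<forall>x\<in>V. \<forall>y\<in>V. x \<noteq> y \<longrightarrow> {x, y} \<in> E)"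

definition block_graph :: "'a set \<Rightarrow> 'a set set \<Rightarrow> bool" where
  "block_graph V E \<longleftrightarrow> graph V E \<and> (\<forall>B EB. is_block V E B EB \<longrightarrow> complete_graph B EB)"

inductive threshold :: "'a set \<Rightarrow> 'a set set \<Rightarrow> bool" where
  single: "threshold {v} {}"
| add_isolated: "threshold V E \<Longrightarrow> v \<notin> V \<Longrightarrow> threshold (insert v V) E"
| add_universal: "threshold V E \<Longrightarrow> v \<notin> V \<Longrightarrow>
     threshold (insert v V) (E \<union> {{v, w} | w. w \<in> V})"

definition threshold_subgraph :: "'a set \<Rightarrow> 'a set set \<Rightarrow> 'a set \<Rightarrow> 'a set set \<Rightarrow> bool" where
  "threshold_subgraph V E VH EH \<longleftrightarrow> subgraph VH EH V E \<and> threshold VH EH"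

definition max_threshold_subgraph :: "'a set \<Rightarrow> 'a set set \<Rightarrow> 'a set \<Rightarrow> 'a set set \<Rightarrow> bool" where
  "max_threshold_subgraph V E VH EH \<longleftrightarrow> threshold_subgraph V E VH EH \<and>
     (\<nexists>VH' EH'. threshold_subgraph V E VH' EH' \<and> EH \<subset> EH')"

definition incident_edges :: "'a set set \<Rightarrow> 'a \<Rightarrow> 'a set set" where
  "incident_edges E u = {e \<in> E. u \<in> e}"

definition neighbours :: "'a set set \<Rightarrow> 'a \<Rightarrow> 'a set" where
  "neighbours E u = {w. {u, w} \<in> E}"

definition Qu :: "'a set \<Rightarrow> 'a set set \<Rightarrow> 'a set set \<Rightarrow> 'a \<Rightarrow> 'a set \<times> 'a set set" where
  "Qu Q EQ E u = (Q \<union> neighbours E u, EQ \<union> incident_edges E u)"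

end

theory Submission
  imports Defs "HOL-Library.Product_Order"
begin

text \<open>A threshold graph with an edge has a vertex u adjacent to every other non-isolated
  vertex. Let N be the set of endpoints of the edges of H that avoid u. The subgraph of G
  induced by u and N has no cut vertex: deleting a vertex other than u leaves a star around u,
  and deleting u leaves H[N], which is connected because it has no isolated vertex and no
  induced 2K2. So u and N lie in one block Q, which is complete; hence every edge of H lies
  in Q or at u, i.e. E(H) \<subseteq> E(Q_u(G)). As Q_u(G) is itself threshold (a clique
  padded with isolated vertices, then u added as a universal vertex), maximality of H gives
  equality.\<close>

lemma graph_edgeE:
  assumes "graph V E" "e \<in> E"
  obtains x y where "e = {x, y}" "x \<noteq> y" "x \<in> V" "y \<in> V"
  using assms unfolding graph_def by meson

lemma graph_edge_subset: "graph V E \<Longrightarrow> e \<in> E \<Longrightarrow> e \<subseteq> V"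
  by (metis graph_edgeE empty_subsetI insert_subset)

lemma graph_finite_edges:
  assumes "graph V E" shows "finite E"
proof -
  have "E \<subseteq> Pow V" using graph_edge_subset[OF assms] by blast
  then show ?thesis using assms unfolding graph_def by (meson finite_Pow_iff finite_subset)
qed

lemma threshold_imp_graph: "threshold V E \<Longrightarrow> graph V E"
proof (induction rule: threshold.induct)
  case (single v)
  then show ?case by (simp add: graph_def)
next
  case (add_isolated V E v)
  then show ?case unfolding graph_def by blast
next
  case (add_universal V E v)
  then show ?case unfolding graph_def by blast
qed

lemma threshold_subgraphI:
  "VH \<subseteq> V \<Longrightarrow> EH \<subseteq> E \<Longrightarrow> threshold VH EH \<Longrightarrow> threshold_subgraph V E VH EH"
  by (simp add: threshold_subgraph_def subgraph_def threshold_imp_graph)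

lemma threshold_dominating_vertex:
  assumes "threshold V E" "E \<noteq> {}"
  shows "\<exists>u\<in>V. \<forall>e\<in>E. \<forall>x\<in>e. x = u \<or> {u, x} \<in> E"
  using assms
proof induction
  case (add_universal V E v)
  have "x \<in> insert v V" if "e \<in> E \<union> {{v, w} |w. w \<in> V}" "x \<in> e" for e x
    using that graph_edge_subset[OF threshold_imp_graph[OF add_universal.hyps(1)]] by blast
  then show ?case by blast
qed auto

lemma threshold_2K2_free:
  "threshold V E \<Longrightarrow> {a, b} \<in> E \<Longrightarrow> {c, d} \<in> E \<Longrightarrow> a \<noteq> c \<Longrightarrow> a \<noteq> d \<Longrightarrow> b \<noteq> c \<Longrightarrow> b \<noteq> d \<Longrightarrow>
     {a, c} \<in> E \<or> {a, d} \<in> E \<or> {b, c} \<in> E \<or> {b, d} \<in> E"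
proof (induction arbitrary: a b c d rule: threshold.induct)
  case (add_universal V E v)
  have mem: "x \<in> V" if "{x, y} \<in> E \<union> {{v, w} |w. w \<in> V}" "x \<noteq> v" for x y
    using that graph_edge_subset[OF threshold_imp_graph[OF add_universal.hyps(1)]]
    by (auto simp: doubleton_eq_iff)
  consider "{a, b} \<in> E \<and> {c, d} \<in> E" | "v \<in> {a, b}" | "v \<in> {c, d}"
    using add_universal.prems(1,2) by (auto simp: doubleton_eq_iff)
  then show ?case
  proof cases
    case 1
    then show ?thesis using add_universal.IH add_universal.prems(3-6) by blast
  next
    case 2
    then have "c \<in> V" using mem[of c d] add_universal.prems by auto
    then show ?thesis using 2 by auto
  next
    case 3
    then have "a \<in> V" using mem[of a b] add_universal.prems by auto
    then show ?thesis using 3 by (auto simp: insert_commute)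
  qed
qed auto

definition clique_edges :: "'a set \<Rightarrow> 'a set set" where
  "clique_edges K = {{x, y} | x y. x \<in> K \<and> y \<in> K \<and> x \<noteq> y}"

lemma clique_edges_insert:
  "x \<notin> K \<Longrightarrow> clique_edges (insert x K) = clique_edges K \<union> {{x, w} | w. w \<in> K}"
  unfolding clique_edges_def by (auto simp: insert_commute)

lemma clique_edges_singleton [simp]: "clique_edges {x} = {}"
  by (auto simp: clique_edges_def)

lemma complete_graph_eq_clique_edges:
  "graph Q EQ \<Longrightarrow> complete_graph Q EQ \<Longrightarrow> EQ = clique_edges Q"
  unfolding graph_def complete_graph_def clique_edges_def by blast

lemma threshold_clique: "finite K \<Longrightarrow> K \<noteq> {} \<Longrightarrow> threshold K (clique_edges K)"
proof (induction K rule: finite_ne_induct)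
  case (singleton x)
  then show ?case using threshold.single by simp
next
  case (insert x K)
  then show ?case using threshold.add_universal[OF insert.IH] by (simp add: clique_edges_insert)
qed

lemma threshold_add_isolated_vertices:
  "finite F \<Longrightarrow> threshold V E \<Longrightarrow> F \<inter> V = {} \<Longrightarrow> threshold (F \<union> V) E"
proof (induction F rule: finite_induct)
  case (insert x F)
  then show ?case using threshold.add_isolated[of "F \<union> V" E x] by simp
qed simp

lemma threshold_clique_with_isolated_vertices:
  assumes "finite W" "K \<subseteq> W" "W \<noteq> {}"
  shows "threshold W (clique_edges K)"
proof -
  obtain K' where K': "K \<subseteq> K'" "K' \<subseteq> W" "K' \<noteq> {}" "clique_edges K' = clique_edges K"
  proof (cases "K = {}")
    case True
    then obtain t where "t \<in> W" using assms by auto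
    then show ?thesis using that[of "{t}"] True by (simp add: clique_edges_def)
  qed (use assms that in blast)
  have "threshold ((W - K') \<union> K') (clique_edges K')"
    using assms K' finite_subset[OF K'(2)]
    by (intro threshold_add_isolated_vertices threshold_clique) auto
  moreover have "(W - K') \<union> K' = W" using K' by auto
  ultimately show ?thesis using K' by simp
qed

lemma threshold_clique_union_star:
  assumes "finite (K \<union> N)" "u \<in> K" "u \<notin> N"
  shows "threshold (K \<union> N) (clique_edges K \<union> {{u, w} | w. w \<in> N})"
proof (cases "(K - {u}) \<union> N = {}")
  case True
  then have "K = {u}" "N = {}" using assms by auto
  then show ?thesis using threshold.single by simp
next
  case False
  let ?T = "(K - {u}) \<union> N"
  have "threshold ?T (clique_edges (K - {u}))"
    using assms False by (intro threshold_clique_with_isolated_vertices) auto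
  then have "threshold (insert u ?T) (clique_edges (K - {u}) \<union> {{u, w} | w. w \<in> ?T})"
    using assms by (intro threshold.add_universal) auto
  moreover have "insert u ?T = K \<union> N" using assms by auto
  moreover have "clique_edges (K - {u}) \<union> {{u, w} | w. w \<in> ?T} = clique_edges K \<union> {{u, w} | w. w \<in> N}"
    using clique_edges_insert[of u "K - {u}"] assms(2) by (auto simp: insert_absorb)
  ultimately show ?thesis by simp
qed

lemma incident_edges_eq_star:
  assumes "graph V E"
  shows "incident_edges E u = {{u, w} | w. w \<in> neighbours E u}"
proof (intro equalityI subsetI)
  fix e assume "e \<in> incident_edges E u"
  then obtain x y where "e \<in> E" "e = {x, y}" "u \<in> e"
    using graph_edgeE[OF assms] by (metis incident_edges_def mem_Collect_eq)
  then have "e = {u, if x = u then y else x}" by auto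
  then show "e \<in> {{u, w} | w. w \<in> neighbours E u}"
    using \<open>e \<in> E\<close> by (force simp: neighbours_def)
qed (auto simp: incident_edges_def neighbours_def)

lemma threshold_subgraph_Qu:
  assumes "graph V E" "subgraph Q EQ V E" "complete_graph Q EQ" "u \<in> Q"
  shows "threshold_subgraph V E (fst (Qu Q EQ E u)) (snd (Qu Q EQ E u))"
proof -
  have QEQ: "Q \<subseteq> V" "EQ \<subseteq> E" "graph Q EQ"
    using assms(2) unfolding subgraph_def by auto
  have NV: "neighbours E u \<subseteq> V" and "u \<notin> neighbours E u"
    using assms(1) unfolding graph_def neighbours_def by (auto simp: doubleton_eq_iff)
  then have "threshold (Q \<union> neighbours E u) (clique_edges Q \<union> {{u, w} | w. w \<in> neighbours E u})"
    using QEQ assms finite_subset[of _ V] by (intro threshold_clique_union_star) (auto simp: graph_def)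
  moreover have "EQ \<union> incident_edges E u \<subseteq> E"
    using QEQ by (auto simp: incident_edges_def)
  moreover have "EQ = clique_edges Q"
    using QEQ(3) assms(3) by (rule complete_graph_eq_clique_edges)
  ultimately show ?thesis
    using QEQ NV assms(1)
    by (simp add: Qu_def incident_edges_eq_star threshold_subgraphI)
qed

lemma threshold_subgraph_single_edge:
  assumes "graph V E" "e \<in> E"
  shows "threshold_subgraph V E e {e}"
proof -
  obtain x y where xy: "e = {x, y}" "x \<noteq> y"
    using graph_edgeE[OF assms] by metis
  have "threshold (insert y {x}) ({} \<union> {{y, w} | w. w \<in> {x}})"
    using xy by (intro threshold.add_universal threshold.single) auto
  then show ?thesis
    using assms xy graph_edge_subset by (intro threshold_subgraphI) (auto simp: insert_commute)
qed

lemma max_threshold_subgraph_edges_nonempty: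
  assumes "graph V E" "E \<noteq> {}" "max_threshold_subgraph V E VH EH"
  shows "EH \<noteq> {}"
proof
  assume "EH = {}"
  obtain e where "e \<in> E" using assms(2) by auto
  then show False
    using assms(3) threshold_subgraph_single_edge[OF assms(1)] \<open>EH = {}\<close>
    unfolding max_threshold_subgraph_def by blast
qed

lemma reachable_mono_edges: "E \<subseteq> E' \<Longrightarrow> reachable V E x y \<Longrightarrow> reachable V E' x y"
  unfolding reachable_def by (auto elim: rtranclp_mono[THEN predicate2D, rotated])

lemma connected_graph_star:
  assumes "u \<in> S" "\<And>x. x \<in> S \<Longrightarrow> x \<noteq> u \<Longrightarrow> {u, x} \<in> E"
  shows "connected_graph S E"
proof -
  let ?R = "\<lambda>a b. {a, b} \<in> E \<and> a \<in> S \<and> b \<in> S"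
  have "?R x u" "?R u x" if "x \<in> S" "x \<noteq> u" for x
    using assms(1) assms(2)[OF that] that insert_commute[of x u] by auto
  then have "?R\<^sup>*\<^sup>* x u \<and> ?R\<^sup>*\<^sup>* u x" if "x \<in> S" for x
    using that by (cases "x = u") auto
  then show ?thesis
    using assms(1) unfolding connected_graph_def reachable_def by (meson empty_iff rtranclp_trans)
qed

lemma reachable_2K2_free_no_isolated:
  assumes no_isolated: "\<And>x. x \<in> N \<Longrightarrow> \<exists>y\<in>N. {x, y} \<in> F"
    and no_2K2: "\<And>a b c d. {a, b} \<in> F \<Longrightarrow> {c, d} \<in> F \<Longrightarrow> a \<noteq> c \<Longrightarrow> a \<noteq> d \<Longrightarrow> b \<noteq> c \<Longrightarrow> b \<noteq> d \<Longrightarrow>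
       {a, c} \<in> F \<or> {a, d} \<in> F \<or> {b, c} \<in> F \<or> {b, d} \<in> F"
    and "x \<in> N" "y \<in> N"
  shows "reachable N F x y"
proof -
  let ?R = "\<lambda>a b. {a, b} \<in> F \<and> a \<in> N \<and> b \<in> N"
  obtain x' y' where x': "x' \<in> N" "{x, x'} \<in> F" and y': "y' \<in> N" "{y, y'} \<in> F"
    using no_isolated \<open>x \<in> N\<close> \<open>y \<in> N\<close> by blast
  obtain p q where "p \<in> {x, x'}" "q \<in> {y, y'}" "p = q \<or> {p, q} \<in> F"
    using no_2K2[OF x'(2) y'(2)] by blast
  then have "?R\<^sup>*\<^sup>* x p" "?R\<^sup>*\<^sup>* p q" "?R\<^sup>*\<^sup>* q y"
    using x' y' assms(3,4) by (auto simp: insert_commute)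
  then show ?thesis
    using assms(3,4) unfolding reachable_def by (meson rtranclp_trans)
qed

definition induced_edges :: "'a set set \<Rightarrow> 'a set \<Rightarrow> 'a set set" where
  "induced_edges E S = {e \<in> E. e \<subseteq> S}"

lemma subgraph_induced_edges:
  assumes "graph V E" "S \<subseteq> V"
  shows "subgraph S (induced_edges E S) V E"
  unfolding subgraph_def
proof (intro conjI)
  show "graph S (induced_edges E S)"
    unfolding graph_def
  proof (intro conjI ballI)
    show "finite S" using finite_subset[OF assms(2)] assms(1) by (simp add: graph_def)
    fix e assume "e \<in> induced_edges E S"
    then have "e \<in> E" "e \<subseteq> S" by (auto simp: induced_edges_def)
    then obtain x y where "e = {x, y}" "x \<noteq> y"
      using graph_edgeE[OF assms(1)] by metis
    then show "\<exists>x y. e = {x, y} \<and> x \<noteq> y \<and> x \<in> S \<and> y \<in> S" using \<open>e \<subseteq> S\<close> by auto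
  qed
qed (auto simp: induced_edges_def assms)

lemma biconn_piece_around_dominating_vertex:
  assumes "threshold VH F" "F \<subseteq> E"
    and dominating: "\<And>e x. e \<in> F \<Longrightarrow> x \<in> e \<Longrightarrow> x = u \<or> {u, x} \<in> F"
  defines "S \<equiv> insert u (\<Union>{e \<in> F. u \<notin> e})"
  shows "biconn_piece S (induced_edges E S)"
proof -
  let ?N = "\<Union>{e \<in> F. u \<notin> e}" and ?F = "{e \<in> F. u \<notin> e}"
  have "u \<in> S" by (simp add: S_def)
  have hub: "{u, x} \<in> induced_edges E S" if x: "x \<in> S" "x \<noteq> u" for x
  proof -
    obtain e where "e \<in> F" "x \<in> e" using x by (auto simp: S_def)
    then have "{u, x} \<in> F" using dominating x(2) by blast
    then show ?thesis using assms(2) x(1) \<open>u \<in> S\<close> by (auto simp: induced_edges_def)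
  qed
  have "reachable (S - {v}) (del_vertex_edges (induced_edges E S) v) x y"
    if "x \<in> S - {v}" "y \<in> S - {v}" for v x y
  proof (cases "v = u")
    case True
    then have "S - {v} = ?N" by (auto simp: S_def)
    have "reachable ?N ?F x y"
    proof (rule reachable_2K2_free_no_isolated)
      show "\<exists>y\<in>?N. {x, y} \<in> ?F" if "x \<in> ?N" for x
      proof -
        obtain e where e: "e \<in> F" "u \<notin> e" "x \<in> e" using \<open>x \<in> ?N\<close> by auto
        obtain a b where "e = {a, b}"
          using graph_edgeE[OF threshold_imp_graph[OF assms(1)] e(1)] by metis
        then have "e = {x, if a = x then b else a}" using e(3) by auto
        then show ?thesis using e by (intro bexI[of _ "if a = x then b else a"]) auto
      qed
      show "{a, c} \<in> ?F \<or> {a, d} \<in> ?F \<or> {b, c} \<in> ?F \<or> {b, d} \<in> ?F"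
        if "{a, b} \<in> ?F" "{c, d} \<in> ?F" "a \<noteq> c" "a \<noteq> d" "b \<noteq> c" "b \<noteq> d" for a b c d
        using that threshold_2K2_free[OF assms(1), of a b c d] by auto
    qed (use that \<open>S - {v} = ?N\<close> in auto)
    moreover have "?F \<subseteq> del_vertex_edges (induced_edges E S) v"
      using True assms(2) unfolding S_def induced_edges_def del_vertex_edges_def by auto
    ultimately show ?thesis using reachable_mono_edges \<open>S - {v} = ?N\<close> by metis
  next
    case False
    have "connected_graph (S - {v}) (del_vertex_edges (induced_edges E S) v)"
      using False hub \<open>u \<in> S\<close> by (intro connected_graph_star) (auto simp: del_vertex_edges_def)
    then show ?thesis using that unfolding connected_graph_def by auto
  qed
  moreover have "connected_graph S (induced_edges E S)"
    using hub \<open>u \<in> S\<close> by (intro connected_graph_star) auto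
  ultimately show ?thesis unfolding biconn_piece_def cut_vertex_def by auto
qed

lemma biconn_piece_in_block:
  assumes "graph V E" "subgraph S ES V E" "biconn_piece S ES"
  shows "\<exists>Q EQ. is_block V E Q EQ \<and> S \<subseteq> Q \<and> ES \<subseteq> EQ"
proof -
  let ?C = "{(B, EB). subgraph B EB V E \<and> biconn_piece B EB}"
  have "?C \<subseteq> Pow V \<times> Pow E" unfolding subgraph_def by auto
  moreover have "finite (Pow V \<times> Pow E)"
    using assms(1) graph_finite_edges[OF assms(1)] by (simp add: graph_def)
  ultimately have "finite ?C" by (rule finite_subset)
  \<comment> \<open>pairs are ordered componentwise by inclusion\<close>
  then obtain Q EQ where "(Q, EQ) \<in> ?C" "(S, ES) \<le> (Q, EQ)" "\<forall>b\<in>?C. (Q, EQ) \<le> b \<longrightarrow> (Q, EQ) = b"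
    using finite_has_maximal2[of ?C "(S, ES)"] assms(2,3) by auto
  then have "is_block V E Q EQ" "S \<subseteq> Q" "ES \<subseteq> EQ" unfolding is_block_def by auto
  then show ?thesis by blast
qed

lemma subset_Qu_edges:
  assumes "graph VH F" "F \<subseteq> E" "complete_graph Q EQ" "\<Union>{e \<in> F. u \<notin> e} \<subseteq> Q"
  shows "F \<subseteq> snd (Qu Q EQ E u)"
proof
  fix e assume "e \<in> F"
  then obtain x y where xy: "e = {x, y}" "x \<noteq> y" using graph_edgeE[OF assms(1)] by metis
  show "e \<in> snd (Qu Q EQ E u)"
  proof (cases "u \<in> e")
    case True
    then show ?thesis using \<open>e \<in> F\<close> assms(2) by (auto simp: Qu_def incident_edges_def)
  next
    case False
    then have "x \<in> Q" "y \<in> Q" using \<open>e \<in> F\<close> xy assms(4) by auto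
    then show ?thesis using xy assms(3) by (auto simp: Qu_def complete_graph_def)
  qed
qed

theorem lemma14:
  fixes V VH :: "'a set" and E EH :: "'a set set"
  assumes "block_graph V E"
    and "E \<noteq> {}"
    and "max_threshold_subgraph V E VH EH"
  shows "\<exists>Q EQ u. is_block V E Q EQ \<and> u \<in> Q \<and>
           EH = snd (Qu Q EQ E u)"
proof -
  have G: "graph V E" and complete: "\<And>B EB. is_block V E B EB \<Longrightarrow> complete_graph B EB"
    using assms(1) unfolding block_graph_def by auto
  have H: "threshold VH EH" "EH \<subseteq> E" "VH \<subseteq> V" "graph VH EH"
    using assms(3) unfolding max_threshold_subgraph_def threshold_subgraph_def subgraph_def by auto
  obtain u where "u \<in> VH" and dominating: "\<And>e x. e \<in> EH \<Longrightarrow> x \<in> e \<Longrightarrow> x = u \<or> {u, x} \<in> EH"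
    using threshold_dominating_vertex[OF H(1) max_threshold_subgraph_edges_nonempty[OF G assms(2,3)]]
    by auto
  define S where "S = insert u (\<Union>{e \<in> EH. u \<notin> e})"
  have "S \<subseteq> V" using \<open>u \<in> VH\<close> H(3) graph_edge_subset[OF H(4)] by (auto simp: S_def)
  moreover have "biconn_piece S (induced_edges E S)"
    unfolding S_def using H(1,2) dominating by (rule biconn_piece_around_dominating_vertex)
  ultimately obtain Q EQ where Q: "is_block V E Q EQ" "S \<subseteq> Q"
    using biconn_piece_in_block[OF G subgraph_induced_edges[OF G]] by metis
  have "u \<in> Q" using Q(2) by (simp add: S_def)
  have "EH \<subseteq> snd (Qu Q EQ E u)"
    using Q(2) by (intro subset_Qu_edges[OF H(4,2) complete[OF Q(1)]]) (auto simp: S_def)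
  moreover have "threshold_subgraph V E (fst (Qu Q EQ E u)) (snd (Qu Q EQ E u))"
    using G Q(1)[unfolded is_block_def, THEN conjunct1] complete[OF Q(1)] \<open>u \<in> Q\<close>
    by (rule threshold_subgraph_Qu)
  ultimately have "EH = snd (Qu Q EQ E u)"
    using assms(3) unfolding max_threshold_subgraph_def by auto
  then show ?thesis using Q(1) \<open>u \<in> Q\<close> by auto
qed

end
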